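(* For any point $\mathbf c\in\mathcal K_{d;\le2}\cap\mathcal U_{d;\le2}$, the orbit $O_d(\mathbb R)\cdot\mathbf c$ and $\mathcal K_{d;\le2}$ intersect transversally, i.e. at every point $q$ of their intersection $T_q(O_d(\mathbb R)\cdot\mathbf c)+T_q\mathcal K_{d;\le2}=\mathbb R^d\oplus\mathfrak{so}(d,\mathbb R)$.
   Context: Fix $d\ge2$. Consider $\mathbb R^d\oplus\mathfrak{so}(d,\mathbb R)$ with elements $(v,M)$, $v=(c_1,\dots,c_d)^\top$, $M$ real skew-symmetric with $M_{ij}=c_{ij}=-M_{ji}$ for $i<j$; $O_d(\mathbb R)$ acts by $A\cdot(v,M)=(Av,AMA^\top)$. Let $\mathcal K_{d;\le2}=\{(v,M): c_i=0\ (1\le i\le d-1),\ c_{j(i+1)}=0\ (1\le j<i\le d-1),\ c_d>0,\ c_{i(i+1)}>0\ (1\le i\le d-1)\}$. $\mathcal U_{d;\le2}$: on $V_{\mathbb C}=\mathbb C^d\oplus\mathfrak{so}(d,\mathbb C)$ (same coordinates) with $O_d(\mathbb C)=\{A:AA^\top=I\}$ acting the same way, let $L^{(1)}=\{c_1=\dots=c_{d-1}=0\}$ and for $2\le i\le d-1$, $L^{(i)}=\{(v,M)\in L^{(i-1)}: c_{k(d-i+2)}=0,\ 1\le k\le d-i\}$. Let $f_1=c_1^2+\dots+c_d^2$; for $2\le i\le d-1$ let $f_i$ be the $O_d(\mathbb C)$-invariant rational function on $V_{\mathbb C}$ with $f_i|_{L^{(i-1)}}=c_{1(d-i+2)}^2+\dots+c_{(d-i+1)(d-i+2)}^2$;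 let $f_d$ be the invariant rational function with $f_d|_{L^{(d-1)}}=c_{12}^2$ (they exist, have real coefficients, and are unique). $\mathcal U_{d;\le2}$ is the set of real $(v,M)$ in the domain of every $f_k$ with $f_k(v,M)\neq0$ for all $k$. *)

theory Defs
  imports Complex_Main "Jordan_Normal_Form.Matrix"
begin

(* Vectors/matrices are JNF
   vectors/matrices of dimension d (0-based internally); the paper's 1-based coordinates
   c_i and c_ij are provided by cv and cm below. *)
type_synonym 'a pt = "'a vec \<times> 'a mat"

definition Vd :: "nat \<Rightarrow> ('a::comm_ring_1) pt set" where
  "Vd d = {(v, M). v \<in> carrier_vec d \<and> M \<in> carrier_mat d d \<and> transpose_mat M = - M}"

definition cv :: "nat \<Rightarrow> 'a pt \<Rightarrow> 'a" where
  "cv i x = fst x $ (i - 1)"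

definition cm :: "nat \<Rightarrow> nat \<Rightarrow> 'a pt \<Rightarrow> 'a" where
  "cm i j x = snd x $$ (i - 1, j - 1)"

definition Ogrp :: "nat \<Rightarrow> ('a::comm_ring_1) mat set" where
  "Ogrp d = {A. A \<in> carrier_mat d d \<and> A * transpose_mat A = 1\<^sub>m d}"

definition act :: "('a::comm_ring_1) mat \<Rightarrow> 'a pt \<Rightarrow> 'a pt" where
  "act A x = (A *\<^sub>v fst x, A * snd x * transpose_mat A)"

definition orbit :: "nat \<Rightarrow> real pt \<Rightarrow> real pt set" where
  "orbit d c = {act A c | A. A \<in> Ogrp d}"

definition Kd :: "nat \<Rightarrow> real pt set" where
  "Kd d = {x \<in> Vd d.
      (\<forall>i. 1 \<le> i \<and> i \<le> d - 1 \<longrightarrow> cv i x = 0) \<and>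
      (\<forall>i j. 1 \<le> j \<and> j < i \<and> i \<le> d - 1 \<longrightarrow> cm j (i + 1) x = 0) \<and>
      cv d x > 0 \<and>
      (\<forall>i. 1 \<le> i \<and> i \<le> d - 1 \<longrightarrow> cm i (i + 1) x > 0)}"

(* the linear subspace of which K_{d;<=2} is an open subset: its tangent space at every point *)
definition TK :: "nat \<Rightarrow> real pt set" where
  "TK d = {x \<in> Vd d.
      (\<forall>i. 1 \<le> i \<and> i \<le> d - 1 \<longrightarrow> cv i x = 0) \<and>
      (\<forall>i j. 1 \<le> j \<and> j < i \<and> i \<le> d - 1 \<longrightarrow> cm j (i + 1) x = 0)}"

(* tangent space at q of the orbit O_d(R).q: image of so(d,R) under the differential of
   A |-> A.q at the identity, X |-> (Xv, XM + MX^T) = (Xv, XM - MX) *)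
definition Torb :: "nat \<Rightarrow> real pt \<Rightarrow> real pt set" where
  "Torb d q = {(X *\<^sub>v fst q, X * snd q + snd q * transpose_mat X) | X.
                 X \<in> carrier_mat d d \<and> transpose_mat X = - X}"

definition ptsum :: "('a::comm_ring_1) pt set \<Rightarrow> 'a pt set \<Rightarrow> 'a pt set" where
  "ptsum S T = {(fst a + fst b, snd a + snd b) | a b. a \<in> S \<and> b \<in> T}"

inductive_set polyfun :: "nat \<Rightarrow> (complex pt \<Rightarrow> complex) set" for d where
  pconst: "(\<lambda>x. c) \<in> polyfun d"
| pcv: "1 \<le> i \<Longrightarrow> i \<le> d \<Longrightarrow> cv i \<in> polyfun d"
| pcm: "1 \<le> i \<Longrightarrow> i < j \<Longrightarrow> j \<le> d \<Longrightarrow> cm i j \<in> polyfun d"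
| padd: "p \<in> polyfun d \<Longrightarrow> q \<in> polyfun d \<Longrightarrow> (\<lambda>x. p x + q x) \<in> polyfun d"
| pmul: "p \<in> polyfun d \<Longrightarrow> q \<in> polyfun d \<Longrightarrow> (\<lambda>x. p x * q x) \<in> polyfun d"

definition ratrep :: "nat \<Rightarrow> (complex pt \<Rightarrow> complex) \<Rightarrow> (complex pt \<Rightarrow> complex) \<Rightarrow> bool" where
  "ratrep d p q \<longleftrightarrow> p \<in> polyfun d \<and> q \<in> polyfun d \<and> (\<exists>x \<in> Vd d. q x \<noteq> 0)"

definition rateq :: "nat \<Rightarrow> (complex pt \<Rightarrow> complex) \<Rightarrow> (complex pt \<Rightarrow> complex)
                    \<Rightarrow> (complex pt \<Rightarrow> complex) \<Rightarrow> (complex pt \<Rightarrow> complex) \<Rightarrow> bool" where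
  "rateq d p1 q1 p2 q2 \<longleftrightarrow> (\<forall>x \<in> Vd d. p1 x * q2 x = p2 x * q1 x)"

definition invariant :: "nat \<Rightarrow> (complex pt \<Rightarrow> complex) \<Rightarrow> (complex pt \<Rightarrow> complex) \<Rightarrow> bool" where
  "invariant d p q \<longleftrightarrow> (\<forall>A \<in> Ogrp d. rateq d (\<lambda>x. p (act A x)) (\<lambda>x. q (act A x)) p q)"

definition restricts_to :: "nat \<Rightarrow> (complex pt \<Rightarrow> complex) \<Rightarrow> (complex pt \<Rightarrow> complex)
                           \<Rightarrow> complex pt set \<Rightarrow> (complex pt \<Rightarrow> complex) \<Rightarrow> bool" where
  "restricts_to d p q L g \<longleftrightarrow>
     (\<exists>p' q'. ratrep d p' q' \<and> rateq d p q p' q' \<and> (\<exists>x \<in> L. q' x \<noteq> 0) \<and>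
              (\<forall>x \<in> L. p' x = g x * q' x))"

definition dom_nonzero :: "nat \<Rightarrow> (complex pt \<Rightarrow> complex) \<Rightarrow> (complex pt \<Rightarrow> complex)
                           \<Rightarrow> complex pt \<Rightarrow> bool" where
  "dom_nonzero d p q z \<longleftrightarrow>
     (\<exists>p' q'. ratrep d p' q' \<and> rateq d p q p' q' \<and> q' z \<noteq> 0 \<and> p' z / q' z \<noteq> 0)"

(* L^{(i)}, 1 <= i <= d-1 (L 0 = V_C is only an auxiliary value) *)
primrec Lset :: "nat \<Rightarrow> nat \<Rightarrow> complex pt set" where
  "Lset d 0 = Vd d"
| "Lset d (Suc n) =
     (if n = 0 then {x \<in> Vd d. \<forall>i. 1 \<le> i \<and> i \<le> d - 1 \<longrightarrow> cv i x = 0}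
      else {x \<in> Lset d n. \<forall>k. 1 \<le> k \<and> k \<le> d - Suc n \<longrightarrow> cm k (d - Suc n + 2) x = 0})"

definition is_f :: "nat \<Rightarrow> nat \<Rightarrow> (complex pt \<Rightarrow> complex) \<Rightarrow> (complex pt \<Rightarrow> complex) \<Rightarrow> bool" where
  "is_f d k p q \<longleftrightarrow> ratrep d p q \<and>
     (if k = 1 then rateq d p q (\<lambda>x. \<Sum>i = 1..d. (cv i x)\<^sup>2) (\<lambda>x. 1)
      else if k < d then invariant d p q \<and>
        restricts_to d p q (Lset d (k - 1)) (\<lambda>x. \<Sum>m = 1..d - k + 1. (cm m (d - k + 2) x)\<^sup>2)
      else invariant d p q \<and> restricts_to d p q (Lset d (d - 1)) (\<lambda>x. (cm 1 2 x)\<^sup>2))"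

definition complexify :: "real pt \<Rightarrow> complex pt" where
  "complexify x = (map_vec complex_of_real (fst x), map_mat complex_of_real (snd x))"

definition Ud :: "nat \<Rightarrow> real pt set" where
  "Ud d = {x \<in> Vd d. \<forall>k. 1 \<le> k \<and> k \<le> d \<longrightarrow>
             (\<exists>p q. is_f d k p q \<and> dom_nonzero d p q (complexify x))}"

end

theory Submission
  imports Defs
begin

(* At a point q = (v, M) of K, v is a positive multiple of the last basis vector and M is a
   tridiagonal skew matrix with positive superdiagonal. For a skew X, the first d - 1 entries of
   X v are multiples of the last column of X, and the entry (a, b), a + 1 < b, of X M - M X is
   M(b-1,b) X(a,b-1) plus terms involving only entries X(i,j) with j >= b. So the coordinates
   that T K does not contain can be prescribed by solving for the upper triangle of X column by
   column, from the last one leftwards, dividing by superdiagonal entries of M. *)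

lemma skew_add_mat:
  fixes A B :: "'a::ab_group_add mat"
  assumes "A \<in> carrier_mat d d" "transpose_mat A = - A"
    and "B \<in> carrier_mat d d" "transpose_mat B = - B"
  shows "transpose_mat (A + B) = - (A + B)"
  using assms by (simp add: transpose_add uminus_add_mat comm_add_mat[of "- A" d d "- B"])

lemma skew_minus_mat:
  fixes A B :: "'a::ab_group_add mat"
  assumes "A \<in> carrier_mat d d" "transpose_mat A = - A"
    and "B \<in> carrier_mat d d" "transpose_mat B = - B"
  shows "transpose_mat (A - B) = - (A - B)"
  using assms by (intro eq_matI) (auto simp: transpose_minus)

lemma skew_orbit_derivative:
  fixes X M :: "'a::comm_ring mat"
  assumes X: "X \<in> carrier_mat d d" and M: "M \<in> carrier_mat d d" "transpose_mat M = - M"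
  shows "transpose_mat (X * M + M * transpose_mat X) = - (X * M + M * transpose_mat X)"
proof -
  have "transpose_mat (X * M + M * transpose_mat X)
        = transpose_mat M * transpose_mat X + transpose_mat (transpose_mat X) * transpose_mat M"
    using X M by (simp add: transpose_add[of "X * M" d d] transpose_mult[of _ d d _ d])
  also have "\<dots> = - (M * transpose_mat X) + - (X * M)"
    using X M by simp
  also have "\<dots> = - (X * M + M * transpose_mat X)"
    using X M by (simp add: uminus_add_mat[of "X * M" d d])
  finally show ?thesis .
qed

lemma Vd_add:
  fixes v w :: "'a::comm_ring_1 vec"
  assumes "(v, M) \<in> Vd d" "(w, N) \<in> Vd d"
  shows "(v + w, M + N) \<in> Vd d"
  using assms skew_add_mat[of M d N] unfolding Vd_def by simp

lemma Torb_subset_Vd: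
  assumes "q \<in> Vd d"
  shows "Torb d q \<subseteq> Vd d"
proof
  fix z assume "z \<in> Torb d q"
  then obtain X where X: "X \<in> carrier_mat d d"
    and z: "z = (X *\<^sub>v fst q, X * snd q + snd q * transpose_mat X)"
    by (auto simp: Torb_def)
  have "fst q \<in> carrier_vec d" "snd q \<in> carrier_mat d d" "transpose_mat (snd q) = - snd q"
    using assms by (auto simp: Vd_def)
  then show "z \<in> Vd d"
    using skew_orbit_derivative[OF X] X unfolding z Vd_def by simp
qed

lemma ptsum_Torb_TK_subset_Vd:
  assumes "q \<in> Vd d"
  shows "ptsum (Torb d q) (TK d) \<subseteq> Vd d"
proof
  fix z assume "z \<in> ptsum (Torb d q) (TK d)"
  then obtain a b where "a \<in> Vd d" "b \<in> Vd d" "z = (fst a + fst b, snd a + snd b)"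
    using Torb_subset_Vd[OF assms] by (auto simp: ptsum_def TK_def)
  then show "z \<in> Vd d"
    using Vd_add[of "fst a" "snd a" d "fst b" "snd b"] by simp
qed

lemma mem_ptsum_Torb_TKI:
  fixes X :: "real mat"
  assumes wN: "(w, N) \<in> Vd d" and vM: "(v, M) \<in> Vd d"
    and X: "X \<in> carrier_mat d d" "transpose_mat X = - X"
    and vec_eq: "\<And>k. k < d - 1 \<Longrightarrow> (X *\<^sub>v v) $ k = w $ k"
    and mat_eq: "\<And>a b. a + 1 < b \<Longrightarrow> b < d \<Longrightarrow> (X * M + M * transpose_mat X) $$ (a, b) = N $$ (a, b)"
  shows "(w, N) \<in> ptsum (Torb d (v, M)) (TK d)"
proof -
  define A where "A = X * M + M * transpose_mat X"
  from wN vM have w: "w \<in> carrier_vec d" and N: "N \<in> carrier_mat d d" "transpose_mat N = - N"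
    and v: "v \<in> carrier_vec d" and M: "M \<in> carrier_mat d d" "transpose_mat M = - M"
    by (auto simp: Vd_def)
  have A: "A \<in> carrier_mat d d" "transpose_mat A = - A"
    using X M skew_orbit_derivative[OF X(1) M] by (auto simp: A_def)
  have orbit_part: "(X *\<^sub>v v, A) \<in> Torb d (v, M)"
    using X by (auto simp: Torb_def A_def)
  have residual: "(w - X *\<^sub>v v, N - A) \<in> TK d"
    unfolding TK_def Vd_def
  proof (intro CollectI conjI allI impI, unfold split)
    fix i assume "1 \<le> i \<and> i \<le> d - 1"
    then have "i - 1 < d - 1" "i - 1 < d" by auto
    then show "cv i (w - X *\<^sub>v v, N - A) = 0"
      using vec_eq w v X by (simp add: cv_def)
  next
    fix i j assume "1 \<le> j \<and> j < i \<and> i \<le> d - 1"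
    then have "A $$ (j - 1, i) = N $$ (j - 1, i)" "j - 1 < d" "i < d"
      unfolding A_def by (auto intro: mat_eq)
    then show "cm j (i + 1) (w - X *\<^sub>v v, N - A) = 0"
      using A by (simp add: cm_def)
  qed (use w v X N A skew_minus_mat[OF N A] in auto)
  have "X *\<^sub>v v + (w - X *\<^sub>v v) = w"
    by (rule eq_vecI) (use w v X in auto)
  moreover have "A + (N - A) = N"
    by (rule eq_matI) (use N A in auto)
  moreover have "(X *\<^sub>v v + (w - X *\<^sub>v v), A + (N - A)) \<in> ptsum (Torb d (v, M)) (TK d)"
    unfolding ptsum_def using orbit_part residual by force
  ultimately show ?thesis
    by simp
qed

lemma sum_supported_on_two:
  fixes f :: "'a \<Rightarrow> 'b::comm_monoid_add"
  assumes "finite S" "p \<in> S" "p \<noteq> q" "\<And>l. l \<in> S \<Longrightarrow> l \<noteq> p \<Longrightarrow> l \<noteq> q \<Longrightarrow> f l = 0"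
  shows "sum f S = f p + (if q \<in> S then f q else 0)"
proof -
  have "sum f S = (\<Sum>l\<in>S. (if l = p then f p else 0) + (if l = q then f q else 0))"
    using assms by (intro sum.cong) auto
  also have "\<dots> = f p + (if q \<in> S then f q else 0)"
    using assms by (simp add: sum.distrib sum.delta)
  finally show ?thesis .
qed

definition tridiagonal :: "nat \<Rightarrow> 'a::zero mat \<Rightarrow> bool" where
  "tridiagonal d M \<longleftrightarrow> (\<forall>i<d. \<forall>j<d. i \<noteq> j + 1 \<and> j \<noteq> i + 1 \<longrightarrow> M $$ (i, j) = 0)"

lemma tridiagonal_if_skew:
  fixes M :: "'a::{idom, ring_char_0} mat"
  assumes M: "M \<in> carrier_mat d d" "transpose_mat M = - M"
    and upper: "\<And>a b. a + 1 < b \<Longrightarrow> b < d \<Longrightarrow> M $$ (a, b) = 0"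
  shows "tridiagonal d M"
  unfolding tridiagonal_def
proof (intro allI impI)
  fix i j assume ij: "i < d" "j < d" "i \<noteq> j + 1 \<and> j \<noteq> i + 1"
  have skew: "M $$ (i, j) = - M $$ (j, i)"
    using ij M by (metis carrier_matD index_transpose_mat(1) index_uminus_mat(1))
  consider "i + 1 < j" | "j + 1 < i" | "i = j"
    using ij(3) by linarith
  then show "M $$ (i, j) = 0"
    by cases (use ij upper skew in auto)
qed

(* For b = 0 the first summand is the diagonal term A $$ (a, 0) * M $$ (0, 0) (truncated
   subtraction), which vanishes; likewise for a = 0 in the next lemma. *)

lemma tridiagonal_mult_entry_right:
  assumes "tridiagonal d M" "A \<in> carrier_mat n d" "M \<in> carrier_mat d d" "a < n" "b < d"
  shows "(A * M) $$ (a, b) = A $$ (a, b - 1) * M $$ (b - 1, b)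
           + (if b + 1 < d then A $$ (a, b + 1) * M $$ (b + 1, b) else 0)"
proof -
  have "(A * M) $$ (a, b) = (\<Sum>l \<in> {0..<d}. A $$ (a, l) * M $$ (l, b))"
    using assms by (simp add: scalar_prod_def)
  also have "\<dots> = A $$ (a, b - 1) * M $$ (b - 1, b)
           + (if b + 1 \<in> {0..<d} then A $$ (a, b + 1) * M $$ (b + 1, b) else 0)"
    by (rule sum_supported_on_two) (use assms in \<open>auto simp: tridiagonal_def\<close>)
  finally show ?thesis by simp
qed

lemma tridiagonal_mult_entry_left:
  assumes "tridiagonal d M" "M \<in> carrier_mat d d" "A \<in> carrier_mat d n" "a < d" "b < n"
  shows "(M * A) $$ (a, b) = M $$ (a, a - 1) * A $$ (a - 1, b)
           + (if a + 1 < d then M $$ (a, a + 1) * A $$ (a + 1, b) else 0)"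
proof -
  have "(M * A) $$ (a, b) = (\<Sum>l \<in> {0..<d}. M $$ (a, l) * A $$ (l, b))"
    using assms by (simp add: scalar_prod_def)
  also have "\<dots> = M $$ (a, a - 1) * A $$ (a - 1, b)
           + (if a + 1 \<in> {0..<d} then M $$ (a, a + 1) * A $$ (a + 1, b) else 0)"
    by (rule sum_supported_on_two) (use assms in \<open>auto simp: tridiagonal_def\<close>)
  finally show ?thesis by simp
qed

definition skew_mat :: "nat \<Rightarrow> (nat \<Rightarrow> nat \<Rightarrow> 'a) \<Rightarrow> 'a::group_add mat" where
  "skew_mat d x = mat d d (\<lambda>(i, j). if i < j then x i j else if j < i then - x j i else 0)"

lemma skew_mat_carrier: "skew_mat d x \<in> carrier_mat d d"
  by (simp add: skew_mat_def)

lemma transpose_skew_mat: "transpose_mat (skew_mat d x) = - skew_mat d x"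
  by (auto simp: skew_mat_def intro!: eq_matI)

lemma index_skew_mat_upper: "i < j \<Longrightarrow> j < d \<Longrightarrow> skew_mat d x $$ (i, j) = x i j"
  by (simp add: skew_mat_def)

lemma tridiagonal_skew_mat_orbit_derivative_entry:
  fixes M :: "'a::comm_ring_1 mat" and x :: "nat \<Rightarrow> nat \<Rightarrow> 'a"
  assumes M: "tridiagonal d M" "M \<in> carrier_mat d d" and ab: "a + 1 < b" "b < d"
  defines "X \<equiv> skew_mat d x"
  shows "(X * M + M * transpose_mat X) $$ (a, b)
           = x a (b - 1) * M $$ (b - 1, b)
             + (if b + 1 < d then x a (b + 1) * M $$ (b + 1, b) else 0)
             - M $$ (a, a - 1) * x (a - 1) b - M $$ (a, a + 1) * x (a + 1) b"
proof -
  have X: "X \<in> carrier_mat d d" "transpose_mat X = - X"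
    by (simp_all add: X_def skew_mat_carrier transpose_skew_mat)
  have "(X * M + M * transpose_mat X) $$ (a, b) = (X * M) $$ (a, b) - (M * X) $$ (a, b)"
    using X M ab by simp
  also have "(X * M) $$ (a, b) = X $$ (a, b - 1) * M $$ (b - 1, b)
             + (if b + 1 < d then X $$ (a, b + 1) * M $$ (b + 1, b) else 0)"
    by (rule tridiagonal_mult_entry_right[OF M(1) X(1) M(2)]) (use ab in auto)
  also have "(M * X) $$ (a, b) = M $$ (a, a - 1) * X $$ (a - 1, b) + M $$ (a, a + 1) * X $$ (a + 1, b)"
    using tridiagonal_mult_entry_left[OF M(1,2) X(1), of a b] ab by simp
  finally show ?thesis
    using ab by (simp add: X_def index_skew_mat_upper)
qed

lemma mult_mat_vec_last_coordinate:
  assumes "X \<in> carrier_mat n d" "v \<in> carrier_vec d" "0 < d" "k < n"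
    and "\<And>i. i + 1 < d \<Longrightarrow> v $ i = 0"
  shows "(X *\<^sub>v v) $ k = X $$ (k, d - 1) * v $ (d - 1)"
proof -
  have "(X *\<^sub>v v) $ k = (\<Sum>i \<in> {0..<d}. X $$ (k, i) * v $ i)"
    using assms by (simp add: scalar_prod_def)
  also have "\<dots> = (\<Sum>i \<in> {d - 1}. X $$ (k, i) * v $ i)"
  proof (rule sum.mono_neutral_right)
    have "i + 1 < d" if "i \<in> {0..<d} - {d - 1}" for i
      using that by auto
    then show "\<forall>i \<in> {0..<d} - {d - 1}. X $$ (k, i) * v $ i = 0"
      using assms(5) by simp
  qed (use assms(3) in auto)
  finally show ?thesis by simp
qed

context
  fixes d :: nat and M N :: "real mat" and w :: "real vec" and c :: real
begin

(* Upper triangle of the skew matrix X, with c = v $ (d - 1): column d - 1 is read off X v = w,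
   and column k < d - 1 off the entry (a, k + 1) of X M - M X = N, dividing by M $$ (k, k + 1).
   Only the values for a < k are meaningful. *)

function tangent_coeff :: "nat \<Rightarrow> nat \<Rightarrow> real" where
  "tangent_coeff a k =
     (if d - 1 \<le> k then w $ a / c
      else (N $$ (a, k + 1)
            - (if k + 2 < d then tangent_coeff a (k + 2) * M $$ (k + 2, k + 1) else 0)
            + M $$ (a, a - 1) * tangent_coeff (a - 1) (k + 1)
            + M $$ (a, a + 1) * tangent_coeff (a + 1) (k + 1)) / M $$ (k, k + 1))"
  by pat_completeness auto
termination by (relation "measure (\<lambda>(a, k). d - k)") auto

declare tangent_coeff.simps [simp del]

lemma tangent_coeff_last_column:
  assumes "c \<noteq> 0"
  shows "tangent_coeff a (d - 1) * c = w $ a"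
  using assms by (simp add: tangent_coeff.simps)

lemma tangent_coeff_solves_entry:
  assumes "a + 1 < b" "b < d" "M $$ (b - 1, b) \<noteq> 0"
  shows "tangent_coeff a (b - 1) * M $$ (b - 1, b)
           + (if b + 1 < d then tangent_coeff a (b + 1) * M $$ (b + 1, b) else 0)
           - M $$ (a, a - 1) * tangent_coeff (a - 1) b - M $$ (a, a + 1) * tangent_coeff (a + 1) b
         = N $$ (a, b)"
proof -
  have "\<not> d - 1 \<le> b - 1" "b - 1 + 1 = b" "b - 1 + 2 = b + 1"
    using assms by auto
  then have "tangent_coeff a (b - 1) * M $$ (b - 1, b)
      = N $$ (a, b) - (if b + 1 < d then tangent_coeff a (b + 1) * M $$ (b + 1, b) else 0)
        + M $$ (a, a - 1) * tangent_coeff (a - 1) b + M $$ (a, a + 1) * tangent_coeff (a + 1) b"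
    using assms(3) by (subst tangent_coeff.simps) simp
  then show ?thesis
    by simp
qed

end

lemma Vd_subset_ptsum_Torb_TK_tridiagonal:
  fixes v :: "real vec"
  assumes vM: "(v, M) \<in> Vd d" and tri: "tridiagonal d M"
    and superdiag: "\<And>i. i + 1 < d \<Longrightarrow> M $$ (i, i + 1) \<noteq> 0"
    and v_last: "\<And>i. i + 1 < d \<Longrightarrow> v $ i = 0" "v $ (d - 1) \<noteq> 0"
  shows "Vd d \<subseteq> ptsum (Torb d (v, M)) (TK d)"
proof
  fix z :: "real pt" assume "z \<in> Vd d"
  then obtain w N where wN: "z = (w, N)" "(w, N) \<in> Vd d"
    by (cases z) auto
  define X where "X = skew_mat d (tangent_coeff d M N w (v $ (d - 1)))"
  have X: "X \<in> carrier_mat d d" "transpose_mat X = - X"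
    by (simp_all add: X_def skew_mat_carrier transpose_skew_mat)
  have v: "v \<in> carrier_vec d" and M: "M \<in> carrier_mat d d"
    using vM by (auto simp: Vd_def)
  have "(w, N) \<in> ptsum (Torb d (v, M)) (TK d)"
  proof (rule mem_ptsum_Torb_TKI[OF wN(2) vM X])
    fix k assume k: "k < d - 1"
    then have "(X *\<^sub>v v) $ k = X $$ (k, d - 1) * v $ (d - 1)"
      using mult_mat_vec_last_coordinate[OF X(1) v _ _ v_last(1)] by simp
    also have "\<dots> = w $ k"
      using k tangent_coeff_last_column[OF v_last(2)] by (simp add: X_def index_skew_mat_upper)
    finally show "(X *\<^sub>v v) $ k = w $ k" .
  next
    fix a b assume ab: "a + 1 < b" "b < d"
    then have "M $$ (b - 1, b) \<noteq> 0"
      using superdiag[of "b - 1"] by simp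
    then show "(X * M + M * transpose_mat X) $$ (a, b) = N $$ (a, b)"
      unfolding X_def tridiagonal_skew_mat_orbit_derivative_entry[OF tri M ab]
      by (rule tangent_coeff_solves_entry[OF ab])
  qed
  then show "z \<in> ptsum (Torb d (v, M)) (TK d)"
    using wN(1) by simp
qed

lemma Kd_coordinates:
  assumes "(v, M) \<in> Kd d"
  shows "(v, M) \<in> Vd d" "\<And>i. i + 1 < d \<Longrightarrow> v $ i = 0" "0 < v $ (d - 1)"
    "\<And>a b. a + 1 < b \<Longrightarrow> b < d \<Longrightarrow> M $$ (a, b) = 0"
    "\<And>i. i + 1 < d \<Longrightarrow> 0 < M $$ (i, i + 1)"
proof -
  have K: "(v, M) \<in> Vd d" "0 < cv d (v, M)"
    "\<And>i. 1 \<le> i \<Longrightarrow> i \<le> d - 1 \<Longrightarrow> cv i (v, M) = 0"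
    "\<And>i j. 1 \<le> j \<Longrightarrow> j < i \<Longrightarrow> i \<le> d - 1 \<Longrightarrow> cm j (i + 1) (v, M) = 0"
    "\<And>i. 1 \<le> i \<Longrightarrow> i \<le> d - 1 \<Longrightarrow> 0 < cm i (i + 1) (v, M)"
    using assms unfolding Kd_def by blast+
  show "(v, M) \<in> Vd d" "0 < v $ (d - 1)"
    using K(1,2) by (simp_all add: cv_def)
  show "v $ i = 0" if "i + 1 < d" for i
    using K(3)[of "i + 1"] that by (simp add: cv_def)
  show "M $$ (a, b) = 0" if "a + 1 < b" "b < d" for a b
    using K(4)[of "a + 1" b] that by (simp add: cm_def)
  show "0 < M $$ (i, i + 1)" if "i + 1 < d" for i
    using K(5)[of "i + 1"] that by (simp add: cm_def)
qed

lemma Vd_subset_ptsum_Torb_TK_Kd: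
  assumes "q \<in> Kd d"
  shows "Vd d \<subseteq> ptsum (Torb d q) (TK d)"
proof -
  obtain v M where q: "q = (v, M)"
    by (cases q)
  note K = Kd_coordinates[OF assms[unfolded q]]
  have "M \<in> carrier_mat d d" "transpose_mat M = - M"
    using K(1) by (auto simp: Vd_def)
  then have tri: "tridiagonal d M"
    using K(4) by (rule tridiagonal_if_skew)
  have superdiag: "M $$ (i, i + 1) \<noteq> 0" if "i + 1 < d" for i
    using K(5)[OF that] by simp
  have "v $ (d - 1) \<noteq> 0"
    using K(3) by simp
  from Vd_subset_ptsum_Torb_TK_tridiagonal[OF K(1) tri superdiag K(2) this]
  show ?thesis
    unfolding q .
qed

theorem lemma4p2:
  fixes d :: nat and c :: "real pt"
  assumes "d \<ge> 2" and "c \<in> Kd d \<inter> Ud d"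
  shows "\<forall>q \<in> orbit d c \<inter> Kd d. ptsum (Torb d q) (TK d) = Vd d"
proof
  fix q assume "q \<in> orbit d c \<inter> Kd d"
  then have "q \<in> Kd d" by simp
  moreover have "Kd d \<subseteq> Vd d"
    by (auto simp: Kd_def)
  ultimately show "ptsum (Torb d q) (TK d) = Vd d"
    using ptsum_Torb_TK_subset_Vd Vd_subset_ptsum_Torb_TK_Kd by blast
qed

end
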